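(* Let $X$ be a nontrivial real Banach space. The following assertions are equivalent: (i) $X^*$ is weakly octahedral; (ii) whenever $E$ is a finite-dimensional subspace of $X^*$, $x\in B_X$, and $\varepsilon>0$, there is a $y^*\in S_{X^*}$ such that $\|x^*+y^*\|\geq(1-\varepsilon)(|x^*(x)|+\|y^*\|)$ for all $x^*\in E$; (iii) whenever $n\in\mathbb{N}$, $x_1^*,\dots,x_n^*\in S_{X^*}$, $x\in B_X$, and $\varepsilon>0$, there is a $y^*\in S_{X^*}$ such that $\|x_i^*+ty^*\|\geq(1-\varepsilon)(|x_i^*(x)|+t)$ for all $i\in\{1,\dots,n\}$ and $t\geq\varepsilon$.
   Context: $B_Z$, $S_Z$ denote the closed unit ball and unit sphere of a Banach space $Z$. A Banach space $Z$ is called weakly octahedral if for every finite-dimensional subspace $E$ of $Z$, every $z^*\in B_{Z^*}$, and every $\varepsilon>0$, there is a $y\in S_Z$ such that $\|z+y\|\geq(1-\varepsilon)(|z^*(z)|+\|y\|)$ for all $z\in E$. (Applied to $Z=X^*$, the functionals $z^*$ range over $B_{X^{**}}$.) *)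

theory Defs
  imports "HOL-Analysis.Analysis"
begin

text \<open>Weakly octahedral normed space Z (Z given as a type). Finite-dimensional subspaces
  are the spans of finite sets; the dual Z* is the type of bounded linear functionals.\<close>
definition weakly_octahedral :: "'z::real_normed_vector itself \<Rightarrow> bool" where
  "weakly_octahedral _ \<longleftrightarrow>
     (\<forall>F::'z set. finite F \<longrightarrow>
       (\<forall>g::'z \<Rightarrow>\<^sub>L real. norm g \<le> 1 \<longrightarrow>
         (\<forall>\<epsilon>>0. \<exists>y::'z. norm y = 1 \<and>
            (\<forall>z\<in>span F. norm (z + y) \<ge> (1 - \<epsilon>) * (\<bar>blinfun_apply g z\<bar> + norm y)))))"

end

theory Submission
  imports Defs
begin

(*
  Evaluation at x in B_X is a functional in B_X**, so (i) gives (ii). Conversely, a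
  finite-dimensional Goldstine lemma provides, for g in B_X**, some x in B_X with
  |g f - f x| <= eps/4 on the compact set E /\ (2/eps) B_X*; vectors of E outside that ball
  satisfy the octahedral inequality for every y in S_X*, so (ii) with eps/2 yields (i).
  (ii) gives (iii) by applying it to x_i*/t, and (iii) gives (ii) by applying it to the
  normalised points of a finite eps/4-net of E /\ (2/eps) B_X*.

  The Goldstine lemma avoids Hahn-Banach: if the values g n (n in a finite set N) were not
  approximately attained on B_X, an almost minimiser x0 of sum n. (n x - g n)^2 over B_X
  would, by a first-order perturbation towards any x in B_X, yield a functional e with
  e x >= g e + d/2 on B_X, contradicting |g e| <= ||e||.
*)

lemma compact_PiE_cball_on:
  "compact (Pi\<^sub>E UNIV (\<lambda>i. if i \<in> B then cball (0::real) r else {0}))"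
proof -
  have "compactin (product_topology (\<lambda>i. euclidean) UNIV)
          (Pi\<^sub>E UNIV (\<lambda>i. if i \<in> B then cball (0::real) r else {0}))"
    by (subst compactin_PiE) auto
  then show ?thesis by (simp add: euclidean_product_topology)
qed

lemma continuous_on_lincomb:
  fixes B :: "'v::real_normed_vector set"
  shows "continuous_on S (\<lambda>c::'v \<Rightarrow> real. \<Sum>b\<in>B. c b *\<^sub>R b)"
  by (intro continuous_on_sum continuous_on_scaleR continuous_on_const
        continuous_on_subset[OF continuous_on_product_coordinates]) auto

lemma independent_sum_abs_le_norm:
  fixes B :: "'v::real_normed_vector set"
  assumes fin: "finite B" and ind: "independent B"
  obtains m where "m > 0" "\<And>c. m * (\<Sum>b\<in>B. \<bar>c b\<bar>) \<le> norm (\<Sum>b\<in>B. c b *\<^sub>R b)"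
proof (cases "B = {}")
  case True
  then show ?thesis using that[of 1] by simp
next
  case False
  then obtain b0 where b0: "b0 \<in> B" by blast
  define K where "K = Pi\<^sub>E UNIV (\<lambda>i. if i \<in> B then cball (0::real) 1 else {0})
                       \<inter> {c. (\<Sum>b\<in>B. \<bar>c b\<bar>) = 1}"
  have "compact K" unfolding K_def
    by (intro compact_Int_closed compact_PiE_cball_on closed_Collect_eq continuous_on_sum
          continuous_on_rabs continuous_on_const
          continuous_on_subset[OF continuous_on_product_coordinates]) auto
  moreover have "(\<lambda>i. if i = b0 then 1 else 0) \<in> K"
    using b0 fin by (auto simp: K_def PiE_iff if_distrib cong: if_cong)
  moreover have "continuous_on K (\<lambda>c. norm (\<Sum>b\<in>B. c b *\<^sub>R b))"
    by (intro continuous_on_norm continuous_on_lincomb)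
  ultimately obtain c0 where c0: "c0 \<in> K"
    and min: "\<And>c. c \<in> K \<Longrightarrow> norm (\<Sum>b\<in>B. c0 b *\<^sub>R b) \<le> norm (\<Sum>b\<in>B. c b *\<^sub>R b)"
    using continuous_attains_inf[of K "\<lambda>c. norm (\<Sum>b\<in>B. c b *\<^sub>R b)"] by blast
  define m where "m = norm (\<Sum>b\<in>B. c0 b *\<^sub>R b)"
  have "m > 0"
  proof -
    have "\<not> (\<forall>b\<in>B. c0 b = 0)" using c0 by (force simp: K_def)
    then show ?thesis using independentD[OF ind fin] by (auto simp: m_def)
  qed
  moreover have "m * (\<Sum>b\<in>B. \<bar>c b\<bar>) \<le> norm (\<Sum>b\<in>B. c b *\<^sub>R b)" for c
  proof (cases "(\<Sum>b\<in>B. \<bar>c b\<bar>) = 0")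
    case False
    define s where "s = (\<Sum>b\<in>B. \<bar>c b\<bar>)"
    have s: "s > 0" using False sum_nonneg[of B "\<lambda>b. \<bar>c b\<bar>"] unfolding s_def by linarith
    define c' where "c' i = (if i \<in> B then c i / s else 0)" for i
    have "\<bar>c i\<bar> \<le> s" if "i \<in> B" for i
      using member_le_sum[of i B "\<lambda>b. \<bar>c b\<bar>"] that fin by (simp add: s_def)
    moreover have "(\<Sum>b\<in>B. \<bar>c' b\<bar>) = (\<Sum>b\<in>B. \<bar>c b\<bar>) / s"
      using s by (simp add: c'_def sum_divide_distrib abs_divide)
    ultimately have "c' \<in> K" using s by (auto simp: K_def PiE_iff c'_def abs_divide s_def)
    then have "m \<le> norm (\<Sum>b\<in>B. c' b *\<^sub>R b)" by (simp add: min m_def)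
    also have "(\<Sum>b\<in>B. c' b *\<^sub>R b) = (1/s) *\<^sub>R (\<Sum>b\<in>B. c b *\<^sub>R b)"
      by (simp add: c'_def scaleR_sum_right)
    finally have "m \<le> norm (\<Sum>b\<in>B. c b *\<^sub>R b) / s"
      using s by simp
    then show ?thesis using s by (simp add: s_def pos_le_divide_eq mult.commute)
  qed simp
  ultimately show ?thesis by (rule that)
qed

lemma compact_span_Int_cball:
  fixes F :: "'v::real_normed_vector set"
  assumes "finite F"
  shows "compact (span F \<inter> cball 0 R)"
proof -
  obtain B where B: "B \<subseteq> F" "independent B" "F \<subseteq> span B"
    using maximal_independent_subset[of F] by blast
  have fin: "finite B" using B(1) assms finite_subset by blast
  have span_B: "span B = span F"
    using B(1,3) by (metis span_mono span_span subset_antisym)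
  obtain m where m: "m > 0" "\<And>c. m * (\<Sum>b\<in>B. \<bar>c b\<bar>) \<le> norm (\<Sum>b\<in>B. c b *\<^sub>R b)"
    using independent_sum_abs_le_norm[OF fin B(2)] by blast
  define L where "L c = (\<Sum>b\<in>B. c b *\<^sub>R b)" for c :: "'v \<Rightarrow> real"
  define P where "P = Pi\<^sub>E UNIV (\<lambda>i. if i \<in> B then cball (0::real) (R / m) else {0})"
  have "span F \<inter> cball 0 R = L ` P \<inter> cball 0 R"
  proof (intro equalityI subsetI)
    fix f assume f: "f \<in> span F \<inter> cball 0 R"
    then obtain u where u: "f = (\<Sum>b\<in>B. u b *\<^sub>R b)"
      using span_finite[OF fin] span_B by auto
    define c where "c i = (if i \<in> B then u i else 0)" for i
    have Lc: "L c = f" by (simp add: L_def u c_def)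
    have "m * (\<Sum>b\<in>B. \<bar>c b\<bar>) \<le> R" using m(2)[of c] Lc f by (simp add: L_def)
    then have "(\<Sum>b\<in>B. \<bar>c b\<bar>) \<le> R / m" using m(1) by (simp add: pos_le_divide_eq mult.commute)
    moreover have "\<bar>c i\<bar> \<le> (\<Sum>b\<in>B. \<bar>c b\<bar>)" if "i \<in> B" for i
      using member_le_sum[of i B "\<lambda>b. \<bar>c b\<bar>"] that fin by simp
    ultimately have "c \<in> P" by (force simp: P_def PiE_iff c_def)
    then show "f \<in> L ` P \<inter> cball 0 R" using Lc f by blast
  next
    fix f assume "f \<in> L ` P \<inter> cball 0 R"
    moreover have "L c \<in> span F" for c
      unfolding L_def span_B[symmetric] by (intro span_sum span_scale span_base) auto
    ultimately show "f \<in> span F \<inter> cball 0 R" by blast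
  qed
  moreover have "compact (L ` P)" unfolding P_def L_def
    by (intro compact_continuous_image compact_PiE_cball_on continuous_on_lincomb)
  ultimately show ?thesis by (simp add: compact_Int_closed)
qed

lemma finite_net_span_Int_cball:
  fixes F :: "'v::real_normed_vector set"
  assumes "finite F" "\<eta> > 0"
  obtains N where "finite N" "N \<subseteq> span F \<inter> cball 0 R"
    "\<And>f. f \<in> span F \<Longrightarrow> norm f \<le> R \<Longrightarrow> \<exists>n\<in>N. norm (f - n) < \<eta>"
proof -
  let ?S = "span F \<inter> cball 0 R"
  have "?S \<subseteq> (\<Union>c\<in>?S. ball c \<eta>)" using assms(2) by force
  then obtain N where "N \<subseteq> ?S" "finite N" "?S \<subseteq> (\<Union>c\<in>N. ball c \<eta>)"
    using compactE_image[OF compact_span_Int_cball[OF assms(1)], of ?S "\<lambda>c. ball c \<eta>"] by blast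
  then show ?thesis using that by (force simp: dist_norm norm_minus_commute)
qed

lemma abs_blinfun_apply_le_norm:
  fixes f :: "'a::real_normed_vector \<Rightarrow>\<^sub>L real"
  assumes "norm x \<le> 1"
  shows "\<bar>f x\<bar> \<le> norm f"
  using norm_blinfun[of f x] mult_left_mono[OF assms, of "norm f"] by simp

lemma abs_blinfun_apply_le_norm_arg:
  fixes f :: "'a::real_normed_vector \<Rightarrow>\<^sub>L real"
  assumes "norm f \<le> 1"
  shows "\<bar>f x\<bar> \<le> norm x"
  using norm_blinfun[of f x] mult_right_mono[OF assms, of "norm x"] by simp

lemma norm_blinfun_le_if_unit_ball:
  fixes e :: "'a::real_normed_vector \<Rightarrow>\<^sub>L real"
  assumes "0 \<le> K" and bound: "\<And>x. norm x \<le> 1 \<Longrightarrow> \<bar>e x\<bar> \<le> K"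
  shows "norm e \<le> K"
proof (rule norm_blinfun_bound[OF \<open>0 \<le> K\<close>])
  fix x :: 'a
  show "norm (e x) \<le> K * norm x"
  proof (cases "x = 0")
    case False
    then have "\<bar>e x\<bar> / norm x \<le> K"
      using bound[of "(1 / norm x) *\<^sub>R x"] by (simp add: blinfun.scaleR_right abs_mult)
    then show ?thesis using False by (simp add: pos_divide_le_eq)
  qed simp
qed

lemma bidual_unit_ball_exists_apply_lt:
  fixes e :: "'a::real_normed_vector \<Rightarrow>\<^sub>L real" and g :: "('a \<Rightarrow>\<^sub>L real) \<Rightarrow>\<^sub>L real"
  assumes "norm g \<le> 1" "c > 0"
  shows "\<exists>x. norm x \<le> 1 \<and> e x < g e + c"
proof (rule ccontr)
  assume "\<nexists>x. norm x \<le> 1 \<and> e x < g e + c"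
  then have ge: "g e + c \<le> e x" if "norm x \<le> 1" for x
    using that by (meson not_less)
  have "\<bar>e x\<bar> \<le> - g e - c" if "norm x \<le> 1" for x
    using ge[OF that] ge[of "- x"] that by (simp add: blinfun.minus_right)
  moreover have "0 \<le> - g e - c" using ge[of 0] by simp
  ultimately have "norm e \<le> - g e - c"
    by (intro norm_blinfun_le_if_unit_ball)
  moreover have "\<bar>g e\<bar> \<le> norm e" by (rule abs_blinfun_apply_le_norm_arg[OF assms(1)])
  ultimately show False using assms(2) by linarith
qed

lemma sum_squares_perturb_cross_term:
  fixes a b :: "'i \<Rightarrow> real"
  assumes "0 < t" "d \<le> (\<Sum>n\<in>N. (a n + t * b n)\<^sup>2)" "(\<Sum>n\<in>N. (a n)\<^sup>2) < d + t * d / 2"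
    "t * (\<Sum>n\<in>N. (b n)\<^sup>2) \<le> d / 2"
  shows "- d / 2 < (\<Sum>n\<in>N. a n * b n)"
proof -
  have "(\<Sum>n\<in>N. (a n + t * b n)\<^sup>2)
          = (\<Sum>n\<in>N. (a n)\<^sup>2) + 2 * t * (\<Sum>n\<in>N. a n * b n) + t * (t * (\<Sum>n\<in>N. (b n)\<^sup>2))"
    by (simp add: power2_eq_square algebra_simps sum.distrib sum_distrib_left)
  moreover have "t * (t * (\<Sum>n\<in>N. (b n)\<^sup>2)) \<le> t * (d / 2)"
    using assms(1,4) by (intro mult_left_mono) auto
  ultimately have "0 < t * (d + 2 * (\<Sum>n\<in>N. a n * b n))"
    using assms(2,3) by (simp add: algebra_simps)
  then show ?thesis using assms(1) by (simp add: zero_less_mult_iff)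
qed

lemma unit_ball_almost_min_sum_squares_cross_term:
  fixes N :: "('a::real_normed_vector \<Rightarrow>\<^sub>L real) set" and c :: "('a \<Rightarrow>\<^sub>L real) \<Rightarrow> real"
  assumes "norm x0 \<le> 1" "norm x \<le> 1" "0 < t" "t \<le> 1"
    and t_small: "t * (4 * (\<Sum>n\<in>N. (norm n)\<^sup>2)) \<le> d / 2"
    and min: "\<And>z. norm z \<le> 1 \<Longrightarrow> d \<le> (\<Sum>n\<in>N. (blinfun_apply n z - c n)\<^sup>2)"
    and almost_min: "(\<Sum>n\<in>N. (blinfun_apply n x0 - c n)\<^sup>2) < d + t * d / 2"
  shows "- d / 2 < (\<Sum>n\<in>N. (blinfun_apply n x0 - c n) * (n x - n x0))"
proof (rule sum_squares_perturb_cross_term[OF \<open>0 < t\<close> _ almost_min])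
  have "x0 + t *\<^sub>R (x - x0) = (1 - t) *\<^sub>R x0 + t *\<^sub>R x" by (simp add: algebra_simps)
  also have "\<dots> \<in> cball 0 1"
    using assms(1-4) by (intro convexD[OF convex_cball]) auto
  finally have "d \<le> (\<Sum>n\<in>N. (blinfun_apply n (x0 + t *\<^sub>R (x - x0)) - c n)\<^sup>2)"
    using min by simp
  also have "\<dots> = (\<Sum>n\<in>N. (blinfun_apply n x0 - c n + t * (n x - n x0))\<^sup>2)"
    by (intro sum.cong) (simp_all add: blinfun.add_right blinfun.scaleR_right
                           blinfun.diff_right algebra_simps)
  finally show "d \<le> (\<Sum>n\<in>N. (blinfun_apply n x0 - c n + t * (n x - n x0))\<^sup>2)" .
  have "(n x - n x0)\<^sup>2 \<le> 4 * (norm n)\<^sup>2" for n :: "'a \<Rightarrow>\<^sub>L real"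
  proof -
    have "\<bar>n x - n x0\<bar> \<le> 2 * norm n"
      using abs_blinfun_apply_le_norm[OF assms(2), of n] abs_blinfun_apply_le_norm[OF assms(1), of n]
      by simp
    from power_mono[OF this, of 2] show ?thesis by (simp add: power_mult_distrib)
  qed
  then have "(\<Sum>n\<in>N. (blinfun_apply n x - n x0)\<^sup>2) \<le> 4 * (\<Sum>n\<in>N. (norm n)\<^sup>2)"
    by (simp add: sum_distrib_left sum_mono)
  from mult_left_mono[OF this, of t] show "t * (\<Sum>n\<in>N. (blinfun_apply n x - n x0)\<^sup>2) \<le> d / 2"
    using assms(3) t_small by linarith
qed

lemma goldstine_finite:
  fixes N :: "('a::real_normed_vector \<Rightarrow>\<^sub>L real) set" and g :: "('a \<Rightarrow>\<^sub>L real) \<Rightarrow>\<^sub>L real"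
  assumes "finite N" "norm g \<le> 1" "\<eta> > 0"
  shows "\<exists>x. norm x \<le> 1 \<and> (\<forall>n\<in>N. \<bar>g n - n x\<bar> \<le> \<eta>)"
proof (rule ccontr)
  assume far: "\<nexists>x. norm x \<le> 1 \<and> (\<forall>n\<in>N. \<bar>g n - n x\<bar> \<le> \<eta>)"
  define D where "D x = (\<Sum>n\<in>N. (blinfun_apply n x - g n)\<^sup>2)" for x
  define d where "d = (INF x\<in>cball 0 1. D x)"
  have bdd: "bdd_below (D ` cball 0 1)"
    by (rule bdd_belowI2[of _ 0]) (simp add: D_def sum_nonneg)
  have D_ge: "d \<le> D x" if "norm x \<le> 1" for x
    unfolding d_def using that by (intro cINF_lower[OF bdd]) simp
  have "\<eta>\<^sup>2 \<le> d" unfolding d_def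
  proof (rule cINF_greatest)
    fix x :: 'a assume "x \<in> cball 0 1"
    with far obtain n where n: "n \<in> N" "\<eta> < \<bar>g n - n x\<bar>" by force
    then have "\<eta>\<^sup>2 \<le> (n x - g n)\<^sup>2"
      using assms(3) by (metis abs_minus_commute less_le power2_abs power_mono)
    also have "\<dots> \<le> D x" unfolding D_def by (rule member_le_sum) (use n assms(1) in auto)
    finally show "\<eta>\<^sup>2 \<le> D x" .
  qed simp
  then have d: "d > 0" using assms(3) by (smt (verit) zero_less_power)
  define M where "M = (\<Sum>n\<in>N. (norm n)\<^sup>2)"
  have "M \<ge> 0" by (simp add: M_def sum_nonneg)
  define t where "t = min 1 (d / (8 * M + 1))"
  have "t \<le> d / (8 * M + 1)" by (simp add: t_def)
  then have "t * (8 * M) + t \<le> d" using \<open>M \<ge> 0\<close> by (simp add: pos_le_divide_eq algebra_simps)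
  moreover have "0 < t" "t \<le> 1" using d \<open>M \<ge> 0\<close> by (auto simp: t_def)
  ultimately have t: "0 < t" "t \<le> 1" "t * (4 * M) \<le> d / 2" by auto
  obtain x0 where x0: "norm x0 \<le> 1" "D x0 < d + t * d / 2"
    using cINF_less_iff[OF _ bdd, of "d + t * d / 2"] d t by (auto simp: d_def)
  define a where "a n = blinfun_apply n x0 - g n" for n
  define e where "e = (\<Sum>n\<in>N. a n *\<^sub>R n)"
  have e_apply: "e x = (\<Sum>n\<in>N. a n * n x)" for x
    by (simp add: e_def blinfun.sum_left blinfun.scaleR_left)
  have "g e = (\<Sum>n\<in>N. a n * g n)"
    by (simp add: e_def blinfun.sum_right blinfun.scaleR_right)
  moreover have "e x0 = (\<Sum>n\<in>N. (a n)\<^sup>2 + a n * g n)"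
    unfolding e_apply by (intro sum.cong) (simp_all add: a_def power2_eq_square algebra_simps)
  ultimately have "e x0 = D x0 + g e" by (simp add: D_def a_def sum.distrib)
  moreover have "- d / 2 < e x - e x0" if "norm x \<le> 1" for x
  proof -
    have "- d / 2 < (\<Sum>n\<in>N. a n * (n x - n x0))"
      unfolding a_def using x0 t \<open>norm x \<le> 1\<close> D_ge
      by (intro unit_ball_almost_min_sum_squares_cross_term) (auto simp: D_def M_def)
    then show ?thesis by (simp add: e_apply sum_subtractf[symmetric] right_diff_distrib)
  qed
  ultimately have "g e + d / 2 \<le> e x" if "norm x \<le> 1" for x
    using D_ge[OF x0(1)] that by fastforce
  then show False
    using bidual_unit_ball_exists_apply_lt[OF assms(2), of "d / 2" e] d by force
qed

lemma goldstine_span: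
  fixes F :: "('a::real_normed_vector \<Rightarrow>\<^sub>L real) set" and g :: "('a \<Rightarrow>\<^sub>L real) \<Rightarrow>\<^sub>L real"
  assumes "finite F" "norm g \<le> 1" "\<delta> > 0"
  obtains x where "norm x \<le> 1" "\<And>f. f \<in> span F \<Longrightarrow> norm f \<le> R \<Longrightarrow> \<bar>g f - f x\<bar> \<le> \<delta>"
proof -
  have "\<delta> / 3 > 0" using assms(3) by simp
  obtain N where N: "finite N" "N \<subseteq> span F \<inter> cball 0 R"
    "\<And>f. f \<in> span F \<Longrightarrow> norm f \<le> R \<Longrightarrow> \<exists>n\<in>N. norm (f - n) < \<delta> / 3"
    using finite_net_span_Int_cball[OF assms(1) \<open>\<delta> / 3 > 0\<close>] by blast
  obtain x where x: "norm x \<le> 1" "\<And>n. n \<in> N \<Longrightarrow> \<bar>g n - n x\<bar> \<le> \<delta> / 3"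
    using goldstine_finite[OF N(1) assms(2) \<open>\<delta> / 3 > 0\<close>] by blast
  have "\<bar>g f - f x\<bar> \<le> \<delta>" if f: "f \<in> span F" "norm f \<le> R" for f
  proof -
    obtain n where n: "n \<in> N" "norm (f - n) < \<delta> / 3" using N(3)[OF f] by blast
    have "\<bar>g f - g n\<bar> \<le> norm (f - n)"
      using abs_blinfun_apply_le_norm_arg[OF assms(2), of "f - n"] by (simp add: blinfun.diff_right)
    moreover have "\<bar>f x - n x\<bar> \<le> norm (f - n)"
      using abs_blinfun_apply_le_norm[OF x(1), of "f - n"] by (simp add: blinfun.diff_left)
    ultimately show ?thesis using x(2)[OF n(1)] n(2) by linarith
  qed
  with x(1) show ?thesis by (rule that)
qed

lemma octahedral_ineq_perturb:
  fixes \<epsilon> \<eta> p q L L' :: real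
  assumes "0 < \<epsilon>" "0 \<le> \<eta>" "\<eta> \<le> \<epsilon> / 4" "0 \<le> p" "0 \<le> q" "q \<le> p + \<eta>"
    "(1 - \<epsilon> / 2) * (p + 1) \<le> L'" "L' \<le> L + \<eta>" "0 \<le> L"
  shows "(1 - \<epsilon>) * (q + 1) \<le> L"
proof (cases "\<epsilon> \<le> 1")
  case True
  have "(1 - \<epsilon>) * (q + 1) \<le> (1 - \<epsilon>) * (p + 1 + \<eta>)"
    using True assms(6) by (intro mult_left_mono) auto
  also have "\<dots> \<le> (1 - \<epsilon> / 2) * (p + 1) - \<eta>"
  proof -
    have "(1 - \<epsilon> / 2) * (p + 1) - \<eta> - (1 - \<epsilon>) * (p + 1 + \<eta>)
            = \<epsilon> * p / 2 + \<epsilon> / 2 - 2 * \<eta> + \<epsilon> * \<eta>"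
      by (simp add: field_simps)
    moreover have "0 \<le> \<epsilon> * p" "0 \<le> \<epsilon> * \<eta>" using assms(1,2,4) by simp_all
    ultimately show ?thesis using assms(3) by linarith
  qed
  finally show ?thesis using assms(7,8) by linarith
next
  case False
  then show ?thesis using assms(5,9) by (smt (verit) mult_nonpos_nonneg)
qed

lemma octahedral_ineq_large_norm:
  fixes z y :: "'v::real_normed_vector"
  assumes "0 < \<epsilon>" "2 / \<epsilon> \<le> norm z" "norm y = 1" "\<bar>a\<bar> \<le> norm z"
  shows "(1 - \<epsilon>) * (\<bar>a\<bar> + norm y) \<le> norm (z + y)"
proof (cases "\<epsilon> \<le> 1")
  case True
  have "2 \<le> \<epsilon> * norm z" using assms(1,2) by (simp add: divide_le_eq mult.commute)
  then have "(1 - \<epsilon>) * (norm z + 1) \<le> norm z - 1" using assms(1) by (simp add: algebra_simps)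
  moreover have "(1 - \<epsilon>) * (\<bar>a\<bar> + 1) \<le> (1 - \<epsilon>) * (norm z + 1)"
    using True assms(4) by (intro mult_left_mono) auto
  moreover have "norm z - norm y \<le> norm (z + y)" by (rule norm_diff_ineq)
  ultimately show ?thesis unfolding assms(3) by linarith
next
  case False
  then show ?thesis by (smt (verit) mult_nonpos_nonneg norm_ge_zero)
qed

definition weak_star_weakly_octahedral :: "'a::real_normed_vector itself \<Rightarrow> bool" where
  "weak_star_weakly_octahedral _ \<longleftrightarrow>
     (\<forall>F::('a \<Rightarrow>\<^sub>L real) set. finite F \<longrightarrow>
       (\<forall>x::'a. norm x \<le> 1 \<longrightarrow>
         (\<forall>\<epsilon>>0. \<exists>y::'a \<Rightarrow>\<^sub>L real. norm y = 1 \<and>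
            (\<forall>f\<in>span F. norm (f + y) \<ge> (1 - \<epsilon>) * (\<bar>blinfun_apply f x\<bar> + norm y)))))"

definition weak_star_weakly_octahedral_rays :: "'a::real_normed_vector itself \<Rightarrow> bool" where
  "weak_star_weakly_octahedral_rays _ \<longleftrightarrow>
     (\<forall>(n::nat) (xs::nat \<Rightarrow> ('a \<Rightarrow>\<^sub>L real)). (\<forall>i\<in>{1..n}. norm (xs i) = 1) \<longrightarrow>
       (\<forall>x::'a. norm x \<le> 1 \<longrightarrow>
         (\<forall>\<epsilon>>0. \<exists>y::'a \<Rightarrow>\<^sub>L real. norm y = 1 \<and>
            (\<forall>i\<in>{1..n}. \<forall>t::real. t \<ge> \<epsilon> \<longrightarrow>
               norm (xs i + t *\<^sub>R y) \<ge> (1 - \<epsilon>) * (\<bar>blinfun_apply (xs i) x\<bar> + t)))))"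

lemma weakly_octahedral_imp_weak_star_weakly_octahedral:
  assumes "weakly_octahedral TYPE('a::real_normed_vector \<Rightarrow>\<^sub>L real)"
  shows "weak_star_weakly_octahedral TYPE('a)"
  unfolding weak_star_weakly_octahedral_def
proof (intro allI impI)
  fix F :: "('a \<Rightarrow>\<^sub>L real) set" and x :: 'a and \<epsilon> :: real
  assume "finite F" "norm x \<le> 1" "\<epsilon> > 0"
  define g where "g = Blinfun (\<lambda>f::'a \<Rightarrow>\<^sub>L real. f x)"
  have g_apply: "g f = f x" for f
    by (simp add: g_def bounded_linear_Blinfun_apply blinfun.bounded_linear_left)
  have "norm g \<le> 1"
    by (rule norm_blinfun_bound)
      (simp_all add: g_apply abs_blinfun_apply_le_norm[OF \<open>norm x \<le> 1\<close>])
  from assms[unfolded weakly_octahedral_def, rule_format, OF \<open>finite F\<close> this \<open>\<epsilon> > 0\<close>]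
  show "\<exists>y::'a \<Rightarrow>\<^sub>L real. norm y = 1 \<and>
          (\<forall>f\<in>span F. norm (f + y) \<ge> (1 - \<epsilon>) * (\<bar>blinfun_apply f x\<bar> + norm y))"
    by (simp add: g_apply)
qed

lemma weak_star_weakly_octahedral_imp_weakly_octahedral:
  assumes "weak_star_weakly_octahedral TYPE('a::real_normed_vector)"
  shows "weakly_octahedral TYPE('a \<Rightarrow>\<^sub>L real)"
  unfolding weakly_octahedral_def
proof (intro allI impI)
  fix F :: "('a \<Rightarrow>\<^sub>L real) set" and g :: "('a \<Rightarrow>\<^sub>L real) \<Rightarrow>\<^sub>L real" and \<epsilon> :: real
  assume F: "finite F" and g: "norm g \<le> 1" and \<epsilon>: "\<epsilon> > 0"
  obtain x where x: "norm x \<le> 1"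
    "\<And>f. f \<in> span F \<Longrightarrow> norm f \<le> 2 / \<epsilon> \<Longrightarrow> \<bar>g f - f x\<bar> \<le> \<epsilon> / 4"
    using goldstine_span[OF F g, of "\<epsilon> / 4" "2 / \<epsilon>"] \<epsilon> by auto
  obtain y where y: "norm y = 1"
    "\<And>f. f \<in> span F \<Longrightarrow> (1 - \<epsilon> / 2) * (\<bar>f x\<bar> + norm y) \<le> norm (f + y)"
    using assms[unfolded weak_star_weakly_octahedral_def, rule_format, OF F x(1), of "\<epsilon> / 2"] \<epsilon>
    by auto
  have "(1 - \<epsilon>) * (\<bar>g f\<bar> + norm y) \<le> norm (f + y)" if f: "f \<in> span F" for f
  proof (cases "norm f \<le> 2 / \<epsilon>")
    case True
    then have close: "\<bar>g f\<bar> \<le> \<bar>f x\<bar> + \<epsilon> / 4" using x(2)[OF f] by linarith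
    have approx: "(1 - \<epsilon> / 2) * (\<bar>f x\<bar> + 1) \<le> norm (f + y)" using y(2)[OF f] y(1) by simp
    have "norm (f + y) \<le> norm (f + y) + \<epsilon> / 4" using \<epsilon> by simp
    from octahedral_ineq_perturb[OF \<epsilon> _ _ abs_ge_zero abs_ge_zero close approx this norm_ge_zero]
    show ?thesis using y(1) \<epsilon> by simp
  next
    case False
    then show ?thesis
      using octahedral_ineq_large_norm[OF \<epsilon> _ y(1) abs_blinfun_apply_le_norm_arg[OF g]] by simp
  qed
  with y(1) show "\<exists>y. norm y = 1 \<and>
                    (\<forall>z\<in>span F. norm (z + y) \<ge> (1 - \<epsilon>) * (\<bar>blinfun_apply g z\<bar> + norm y))"
    by blast
qed

lemma weak_star_weakly_octahedral_imp_rays: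
  assumes "weak_star_weakly_octahedral TYPE('a::real_normed_vector)"
  shows "weak_star_weakly_octahedral_rays TYPE('a)"
  unfolding weak_star_weakly_octahedral_rays_def
proof (intro allI impI)
  fix n :: nat and xs :: "nat \<Rightarrow> ('a \<Rightarrow>\<^sub>L real)" and x :: 'a and \<epsilon> :: real
  assume "\<forall>i\<in>{1..n}. norm (xs i) = 1" "norm x \<le> 1" "\<epsilon> > 0"
  obtain y where y: "norm y = 1"
    "\<And>f. f \<in> span (xs ` {1..n}) \<Longrightarrow> (1 - \<epsilon>) * (\<bar>f x\<bar> + norm y) \<le> norm (f + y)"
    using assms[unfolded weak_star_weakly_octahedral_def, rule_format,
                OF _ \<open>norm x \<le> 1\<close> \<open>\<epsilon> > 0\<close>, of "xs ` {1..n}"] by auto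
  have "(1 - \<epsilon>) * (\<bar>xs i x\<bar> + t) \<le> norm (xs i + t *\<^sub>R y)" if "i \<in> {1..n}" "\<epsilon> \<le> t" for i t
  proof -
    have t: "t > 0" using that(2) \<open>\<epsilon> > 0\<close> by linarith
    have "(1/t) *\<^sub>R xs i \<in> span (xs ` {1..n})" using that(1) by (intro span_scale span_base) simp
    from y(2)[OF this] have scaled: "(1 - \<epsilon>) * (\<bar>xs i x\<bar> / t + 1) \<le> norm ((1/t) *\<^sub>R xs i + y)"
      using t y(1) by (simp add: blinfun.scaleR_left abs_mult)
    have "(1 - \<epsilon>) * (\<bar>xs i x\<bar> + t) = t * ((1 - \<epsilon>) * (\<bar>xs i x\<bar> / t + 1))"
      using t by (simp add: field_simps)
    also have "\<dots> \<le> t * norm ((1/t) *\<^sub>R xs i + y)"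
      using scaled t by (intro mult_left_mono) simp_all
    also have "\<dots> = norm (t *\<^sub>R ((1/t) *\<^sub>R xs i + y))" using t by simp
    also have "t *\<^sub>R ((1/t) *\<^sub>R xs i + y) = xs i + t *\<^sub>R y" using t by (simp add: scaleR_add_right)
    finally show ?thesis .
  qed
  with y(1) show "\<exists>y::'a \<Rightarrow>\<^sub>L real. norm y = 1 \<and>
          (\<forall>i\<in>{1..n}. \<forall>t. \<epsilon> \<le> t \<longrightarrow> (1 - \<epsilon>) * (\<bar>xs i x\<bar> + t) \<le> norm (xs i + t *\<^sub>R y))"
    by blast
qed

lemma weak_star_weakly_octahedral_rays_finite:
  fixes N :: "('a::real_normed_vector \<Rightarrow>\<^sub>L real) set"
  assumes "weak_star_weakly_octahedral_rays TYPE('a)" "finite N" "norm x \<le> 1" "\<epsilon> > 0"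
  obtains y :: "'a \<Rightarrow>\<^sub>L real" where "norm y = 1"
    "\<And>n. n \<in> N \<Longrightarrow> norm n \<le> 1 / \<epsilon> \<Longrightarrow> (1 - \<epsilon>) * (\<bar>n x\<bar> + 1) \<le> norm (n + y)"
proof -
  obtain h where h: "bij_betw h {1..card (N - {0})} (N - {0})"
    using ex_bij_betw_nat_finite_1[of "N - {0}"] assms(2) by blast
  define xs where "xs i = (1 / norm (h i)) *\<^sub>R h i" for i
  have xs_unit: "norm (xs i) = 1" if "i \<in> {1..card (N - {0})}" for i
    using bij_betwE[OF h] that by (simp add: xs_def)
  from assms(1)[unfolded weak_star_weakly_octahedral_rays_def, rule_format,
                of "card (N - {0})" xs, OF xs_unit assms(3,4)]
  obtain y where y: "norm y = 1"
    "\<And>i t. i \<in> {1..card (N - {0})} \<Longrightarrow> \<epsilon> \<le> t \<Longrightarrow>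
       (1 - \<epsilon>) * (\<bar>xs i x\<bar> + t) \<le> norm (xs i + t *\<^sub>R y)"
    by blast
  have "(1 - \<epsilon>) * (\<bar>n x\<bar> + 1) \<le> norm (n + y)" if n: "n \<in> N" "norm n \<le> 1 / \<epsilon>" for n
  proof (cases "n = 0")
    case True
    then show ?thesis using y(1) assms(4) by simp
  next
    case False
    then have "n \<in> h ` {1..card (N - {0})}" using n(1) bij_betw_imp_surj_on[OF h] by simp
    then obtain i where i: "i \<in> {1..card (N - {0})}" "h i = n" by blast
    have n_pos: "norm n > 0" using False by simp
    have "\<epsilon> \<le> 1 / norm n" using n(2) n_pos assms(4) by (simp add: field_simps)
    from y(2)[OF i(1) this] have ray:
      "(1 - \<epsilon>) * (\<bar>xs i x\<bar> + 1 / norm n) \<le> norm (xs i + (1 / norm n) *\<^sub>R y)" .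
    have "(1 - \<epsilon>) * (\<bar>n x\<bar> + 1) = norm n * ((1 - \<epsilon>) * (\<bar>xs i x\<bar> + 1 / norm n))"
      using n_pos by (simp add: xs_def i(2) blinfun.scaleR_left abs_mult field_simps)
    also have "\<dots> \<le> norm n * norm (xs i + (1 / norm n) *\<^sub>R y)"
      using ray by (rule mult_left_mono) simp
    also have "\<dots> = norm (norm n *\<^sub>R (xs i + (1 / norm n) *\<^sub>R y))" by simp
    also have "norm n *\<^sub>R (xs i + (1 / norm n) *\<^sub>R y) = n + y"
      using n_pos by (simp add: xs_def i(2) scaleR_add_right)
    finally show ?thesis .
  qed
  with y(1) show ?thesis by (rule that)
qed

lemma weak_star_weakly_octahedral_rays_imp_weak_star:
  assumes "weak_star_weakly_octahedral_rays TYPE('a::real_normed_vector)"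
  shows "weak_star_weakly_octahedral TYPE('a)"
  unfolding weak_star_weakly_octahedral_def
proof (intro allI impI)
  fix F :: "('a \<Rightarrow>\<^sub>L real) set" and x :: 'a and \<epsilon> :: real
  assume F: "finite F" and x: "norm x \<le> 1" and \<epsilon>: "\<epsilon> > 0"
  have "\<epsilon> / 4 > 0" "\<epsilon> / 2 > 0" using \<epsilon> by simp_all
  obtain N where N: "finite N" "N \<subseteq> span F \<inter> cball 0 (2 / \<epsilon>)"
    "\<And>f. f \<in> span F \<Longrightarrow> norm f \<le> 2 / \<epsilon> \<Longrightarrow> \<exists>n\<in>N. norm (f - n) < \<epsilon> / 4"
    using finite_net_span_Int_cball[OF F \<open>\<epsilon> / 4 > 0\<close>, where R = "2 / \<epsilon>"] by blast
  obtain y where y: "norm y = 1"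
    "\<And>n. n \<in> N \<Longrightarrow> norm n \<le> 1 / (\<epsilon> / 2) \<Longrightarrow> (1 - \<epsilon> / 2) * (\<bar>n x\<bar> + 1) \<le> norm (n + y)"
    using weak_star_weakly_octahedral_rays_finite[OF assms N(1) x \<open>\<epsilon> / 2 > 0\<close>] by blast
  have "(1 - \<epsilon>) * (\<bar>f x\<bar> + norm y) \<le> norm (f + y)" if f: "f \<in> span F" for f
  proof (cases "norm f \<le> 2 / \<epsilon>")
    case True
    then obtain n where n: "n \<in> N" "norm (f - n) < \<epsilon> / 4" using N(3) f by blast
    have "\<bar>f x - n x\<bar> \<le> norm (f - n)"
      using abs_blinfun_apply_le_norm[OF x, of "f - n"] by (simp add: blinfun.diff_left)
    then have close: "\<bar>f x\<bar> \<le> \<bar>n x\<bar> + norm (f - n)" by linarith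
    have triangle: "norm (n + y) \<le> norm (f + y) + norm (f - n)"
      using norm_triangle_ineq[of "f + y" "n - f"] by (simp add: norm_minus_commute algebra_simps)
    have "norm n \<le> 1 / (\<epsilon> / 2)" using N(2) n(1) by auto
    from y(2)[OF n(1) this] have "(1 - \<epsilon> / 2) * (\<bar>n x\<bar> + 1) \<le> norm (n + y)" .
    from octahedral_ineq_perturb
           [OF \<epsilon> norm_ge_zero _ abs_ge_zero abs_ge_zero close this triangle norm_ge_zero]
    show ?thesis using n(2) y(1) by simp
  next
    case False
    then show ?thesis
      using octahedral_ineq_large_norm[OF \<epsilon> _ y(1) abs_blinfun_apply_le_norm[OF x]] by simp
  qed
  with y(1) show "\<exists>y::'a \<Rightarrow>\<^sub>L real. norm y = 1 \<and>
          (\<forall>f\<in>span F. norm (f + y) \<ge> (1 - \<epsilon>) * (\<bar>blinfun_apply f x\<bar> + norm y))"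
    by blast
qed

theorem proposition2p6:
  fixes X :: "'a::banach itself"
  assumes nontriv: "\<exists>x::'a. x \<noteq> 0"
  shows "(weakly_octahedral TYPE('a \<Rightarrow>\<^sub>L real)
           \<longleftrightarrow>
          (\<forall>F::('a \<Rightarrow>\<^sub>L real) set. finite F \<longrightarrow>
            (\<forall>x::'a. norm x \<le> 1 \<longrightarrow>
              (\<forall>\<epsilon>>0. \<exists>y::'a \<Rightarrow>\<^sub>L real. norm y = 1 \<and>
                 (\<forall>f\<in>span F. norm (f + y) \<ge> (1 - \<epsilon>) * (\<bar>blinfun_apply f x\<bar> + norm y))))))
       \<and> (weakly_octahedral TYPE('a \<Rightarrow>\<^sub>L real)
           \<longleftrightarrow>
          (\<forall>(n::nat) (xs::nat \<Rightarrow> ('a \<Rightarrow>\<^sub>L real)). (\<forall>i\<in>{1..n}. norm (xs i) = 1) \<longrightarrow>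
            (\<forall>x::'a. norm x \<le> 1 \<longrightarrow>
              (\<forall>\<epsilon>>0. \<exists>y::'a \<Rightarrow>\<^sub>L real. norm y = 1 \<and>
                 (\<forall>i\<in>{1..n}. \<forall>t::real. t \<ge> \<epsilon> \<longrightarrow>
                    norm (xs i + t *\<^sub>R y) \<ge> (1 - \<epsilon>) * (\<bar>blinfun_apply (xs i) x\<bar> + t))))))"
proof -
  have "weakly_octahedral TYPE('a \<Rightarrow>\<^sub>L real) \<longleftrightarrow> weak_star_weakly_octahedral TYPE('a)"
    using weakly_octahedral_imp_weak_star_weakly_octahedral
      weak_star_weakly_octahedral_imp_weakly_octahedral by blast
  moreover have "weak_star_weakly_octahedral TYPE('a) \<longleftrightarrow> weak_star_weakly_octahedral_rays TYPE('a)"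
    using weak_star_weakly_octahedral_imp_rays weak_star_weakly_octahedral_rays_imp_weak_star by blast
  ultimately have "(weakly_octahedral TYPE('a \<Rightarrow>\<^sub>L real) \<longleftrightarrow> weak_star_weakly_octahedral TYPE('a))
    \<and> (weakly_octahedral TYPE('a \<Rightarrow>\<^sub>L real) \<longleftrightarrow> weak_star_weakly_octahedral_rays TYPE('a))"
    by blast
  then show ?thesis
    unfolding weak_star_weakly_octahedral_def weak_star_weakly_octahedral_rays_def .
qed

end
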